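(* Let $N$ be a nonnegative integer, let $\eta_1,\eta_2$ be real numbers with $0<\eta_1,\eta_2<1$ and $\eta_1+\eta_2<1$, and let $u_1,v_1,u_2,v_2$ be arbitrary complex numbers. Then for all nonnegative integers $n_1,n_2$ with $n_1+n_2\le N$, \[ \sum_{\substack{x_1,x_2\ge 0\\ x_1+x_2\le N}} b_2(x_1,x_2;N;\eta_1,\eta_2)\,P_{n_1,n_2}(x_1,x_2)=(1-\eta_1u_1-\eta_2v_1)^{n_1}(1-\eta_1u_2-\eta_2v_2)^{n_2}. \]
   Context: Notation: $(a)_k=a(a+1)\cdots(a+k-1)$, $(a)_0=1$, is the Pochhammer symbol. For a nonnegative integer $N$ and nonnegative integers $m_1,m_2,x_1,x_2$ with $m_1+m_2\le N$, $x_1+x_2\le N$, and parameters $u_1,v_1,u_2,v_2$, define the 2-variable Krawtchouk polynomial \[ P_{m_1,m_2}(x_1,x_2)=\sum_{\substack{i,j,k,l\ge 0\\ i+j+k+l\le N}}\frac{(-m_1)_{i+j}(-m_2)_{k+l}(-x_1)_{i+k}(-x_2)_{j+l}}{i!\,j!\,k!\,l!\,(-N)_{i+j+k+l}}\,u_1^i v_1^j u_2^k v_2^l . \] The trinomial distribution is $b_2(x_1,x_2;N;\eta_1,\eta_2)=\frac{N!}{x_1!\,x_2!\,(N-x_1-x_2)!}\eta_1^{x_1}\eta_2^{x_2}(1-\eta_1-\eta_2)^{N-x_1-x_2}$. *)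

theory Defs
  imports "HOL-Analysis.Analysis"
begin

definition krawtchouk2 ::
  "nat \<Rightarrow> complex \<Rightarrow> complex \<Rightarrow> complex \<Rightarrow> complex \<Rightarrow> nat \<Rightarrow> nat \<Rightarrow> nat \<Rightarrow> nat \<Rightarrow> complex" where
  "krawtchouk2 N u1 v1 u2 v2 m1 m2 x1 x2 =
    (\<Sum>(i,j,k,l) \<in> {(i,j,k,l). i + j + k + l \<le> N}.
       pochhammer (- of_nat m1) (i + j) * pochhammer (- of_nat m2) (k + l)
       * pochhammer (- of_nat x1) (i + k) * pochhammer (- of_nat x2) (j + l)
       / (fact i * fact j * fact k * fact l * pochhammer (- of_nat N) (i + j + k + l))
       * u1 ^ i * v1 ^ j * u2 ^ k * v2 ^ l)"

definition trinomial :: "nat \<Rightarrow> nat \<Rightarrow> nat \<Rightarrow> real \<Rightarrow> real \<Rightarrow> real" where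
  "trinomial x1 x2 N eta1 eta2 =
    fact N / (fact x1 * fact x2 * fact (N - x1 - x2))
    * eta1 ^ x1 * eta2 ^ x2 * (1 - eta1 - eta2) ^ (N - x1 - x2)"

end

theory Submission imports Defs begin

(*
  Expanding P_{n1,n2}(x1,x2) as its defining finite series and interchanging the
  two summations reduces the trinomial average of P to averages of the products
  (-x1)_p (-x2)_q.  These factorial moments of the trinomial law are
      E[(-x1)_p (-x2)_q] = (-N)_{p+q} eta1^p eta2^q     (p + q <= N),
  which follows from two successive binomial sums and the absorption identity for
  falling factorials.  The factor (-N)_{p+q} cancels against the denominator of the
  Krawtchouk series, the remaining quadruple sum splits into a product of two
  double sums, and each double sum is a trinomial expansion
      sum_{i+j<=m} (-m)_{i+j} X^i Y^j / (i! j!) = (1 - X - Y)^m.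
*)

section \<open>Pochhammer symbols at negative integers\<close>

lemma pochhammer_neg_of_nat_div_fact:
  "pochhammer (- of_nat m :: 'a::field_char_0) k / fact k = (-1)^k * of_nat (m choose k)"
  by (simp add: binomial_gbinomial gbinomial_pochhammer)

lemma pochhammer_neg_of_nat_fact:
  assumes "p \<le> x"
  shows "pochhammer (- of_nat x :: 'a::field_char_0) p = (-1)^p * fact x / fact (x - p)"
proof -
  have "pochhammer (- of_nat x :: 'a) p = (-1)^p * (fact p * of_nat (x choose p))"
    using pochhammer_neg_of_nat_div_fact[of x p, where 'a='a] by (simp add: field_simps)
  also have "\<dots> = (-1)^p * fact x / fact (x - p)"
    using fact_binomial[OF assms, where 'a='a] by simp
  finally show ?thesis .
qed

lemma binomial_absorb_pochhammer:
  assumes "p \<le> x" "x + q \<le> n"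
  shows "of_nat (n choose x) * pochhammer (- of_nat x) p * pochhammer (- of_nat (n - x)) q
     = pochhammer (- of_nat n :: 'a::field_char_0) (p + q) * of_nat ((n - p - q) choose (x - p))"
proof -
  have rest: "n - p - q - (x - p) = n - x - q" using assms by simp
  have px: "pochhammer (- of_nat x :: 'a) p = (-1)^p * fact x / fact (x - p)"
    and pnx: "pochhammer (- of_nat (n - x) :: 'a) q = (-1)^q * fact (n - x) / fact (n - x - q)"
    using assms by (intro pochhammer_neg_of_nat_fact; simp)+
  have pn: "pochhammer (- of_nat n :: 'a) (p + q) = (-1)^(p + q) * fact n / fact (n - p - q)"
    using assms pochhammer_neg_of_nat_fact[of "p + q" n, where 'a='a] by (simp add: diff_diff_add)
  have bn: "(of_nat (n choose x) :: 'a) = fact n / (fact x * fact (n - x))"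
    using assms by (intro binomial_fact) simp
  have brest: "(of_nat ((n - p - q) choose (x - p)) :: 'a)
      = fact (n - p - q) / (fact (x - p) * fact (n - x - q))"
    using assms binomial_fact[of "x - p" "n - p - q", where 'a='a] rest by simp
  show ?thesis
    unfolding px pnx pn bn brest by (simp add: power_add field_simps)
qed

section \<open>Factorial moments of the binomial and trinomial laws\<close>

text \<open>Factorial moment of the binomial law, in the shifted form needed for the
  iterated trinomial sum: the weight d^(n-x-q) matches the factor (-(n-x))_q.\<close>

lemma binomial_factorial_moment_shifted:
  assumes "p + q \<le> n"
  shows "(\<Sum>x\<le>n. of_nat (n choose x) * pochhammer (- of_nat x) p * pochhammer (- of_nat (n - x)) q
            * a^x * d^(n - x - q))
       = pochhammer (- of_nat n :: 'a::field_char_0) (p + q) * a^p * (a + d)^(n - p - q)"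
proof -
  define M where "M = n - p - q"
  have n: "n = M + p + q" using assms M_def by simp
  let ?f = "\<lambda>x. of_nat (n choose x) * pochhammer (- of_nat x :: 'a) p
            * pochhammer (- of_nat (n - x)) q * a^x * d^(n - x - q)"
  have "(\<Sum>x\<le>n. ?f x) = (\<Sum>x\<in>{0 + p..M + p}. ?f x)"
  proof (rule sum.mono_neutral_right)
    show "\<forall>x\<in>{..n} - {0 + p..M + p}. ?f x = 0"
    proof
      fix x assume "x \<in> {..n} - {0 + p..M + p}"
      then have "x < p \<or> n - x < q" using n by auto
      then show "?f x = 0" by (auto simp: pochhammer_of_nat_eq_0_iff)
    qed
  qed (use n in auto)
  also have "\<dots> = (\<Sum>y\<in>{0..M}. ?f (y + p))" by (rule sum.shift_bounds_cl_nat_ivl)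
  also have "\<dots> = (\<Sum>y\<le>M. pochhammer (- of_nat n) (p + q) * a^p * (of_nat (M choose y) * a^y * d^(M - y)))"
  proof (rule sum.cong)
    fix y assume "y \<in> {..M}"
    then have "n - (y + p) - q = M - y" "n - p - q = M" using n by auto
    moreover have "of_nat (n choose (y + p)) * pochhammer (- of_nat (y + p)) p
        * pochhammer (- of_nat (n - (y + p))) q
      = pochhammer (- of_nat n :: 'a) (p + q) * of_nat ((n - p - q) choose (y + p - p))"
      using \<open>y \<in> {..M}\<close> n by (intro binomial_absorb_pochhammer) auto
    ultimately show "?f (y + p) = pochhammer (- of_nat n) (p + q) * a^p * (of_nat (M choose y) * a^y * d^(M - y))"
      by (simp add: power_add algebra_simps)
  qed (auto simp: atLeast0AtMost)
  also have "\<dots> = pochhammer (- of_nat n :: 'a) (p + q) * a^p * (a + d)^M"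
    by (simp add: binomial_ring sum_distrib_left)
  finally show ?thesis by (simp add: M_def)
qed

text \<open>The ordinary binomial factorial moment E[(-x)_q]; it holds for every q, since
  both sides vanish when q > m.\<close>

lemma binomial_factorial_moment:
  "(\<Sum>x\<le>m. of_nat (m choose x) * pochhammer (- of_nat x) q * b^x * c^(m - x))
       = pochhammer (- of_nat m :: 'a::field_char_0) q * b^q * (b + c)^(m - q)"
proof (cases "q \<le> m")
  case True
  then show ?thesis using binomial_factorial_moment_shifted[of q 0 m b c] by simp
next
  case False
  then have "\<forall>x\<in>{..m}. pochhammer (- of_nat x :: 'a) q = 0"
    by (auto simp: pochhammer_of_nat_eq_0_iff)
  then have "(\<Sum>x\<le>m. of_nat (m choose x) * pochhammer (- of_nat x) q * b^x * c^(m - x)) = (0::'a)"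
    by (intro sum.neutral) simp
  then show ?thesis using False by (simp add: pochhammer_of_nat_eq_0_iff)
qed

lemma sum_triangle:
  fixes N :: nat
  shows "(\<Sum>(x1, x2)\<in>{(x1, x2). x1 + x2 \<le> N}. f x1 x2) = (\<Sum>x1\<le>N. \<Sum>x2\<le>N - x1. f x1 x2)"
proof -
  have "{(x1, x2). x1 + x2 \<le> N} = Sigma {..N} (\<lambda>x1. {..N - x1})" by auto
  then show ?thesis by (simp add: sum.Sigma)
qed

text \<open>Factorial moments of the trinomial law with arbitrary weights a, b, c:
  sum over x1 by the shifted binomial moment after summing x2 by the plain one.\<close>

lemma trinomial_factorial_moment_general:
  assumes "p + q \<le> N"
  shows "(\<Sum>(x1, x2)\<in>{(x1, x2). x1 + x2 \<le> N}.
      fact N / (fact x1 * fact x2 * fact (N - x1 - x2)) * a^x1 * b^x2 * c^(N - x1 - x2)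
      * pochhammer (- of_nat x1) p * pochhammer (- of_nat x2) q)
    = pochhammer (- of_nat N :: 'a::field_char_0) (p + q) * a^p * b^q * (a + b + c)^(N - p - q)"
proof -
  have "(\<Sum>(x1, x2)\<in>{(x1, x2). x1 + x2 \<le> N}.
      fact N / (fact x1 * fact x2 * fact (N - x1 - x2)) * a^x1 * b^x2 * c^(N - x1 - x2)
      * pochhammer (- of_nat x1) p * pochhammer (- of_nat x2) q)
    = (\<Sum>x1\<le>N. of_nat (N choose x1) * pochhammer (- of_nat x1) p * a^x1 *
         (\<Sum>x2\<le>N - x1. of_nat ((N - x1) choose x2) * pochhammer (- of_nat x2) q * b^x2 * c^(N - x1 - x2)))"
    unfolding sum_triangle sum_distrib_left
  proof (intro sum.cong refl)
    fix x1 x2 assume "x1 \<in> {..N}" "x2 \<in> {..N - x1}"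
    then have "(of_nat (N choose x1) :: 'a) = fact N / (fact x1 * fact (N - x1))"
      "(of_nat ((N - x1) choose x2) :: 'a) = fact (N - x1) / (fact x2 * fact (N - x1 - x2))"
      by (intro binomial_fact; simp)+
    note binomials = this
    show "fact N / (fact x1 * fact x2 * fact (N - x1 - x2)) * a^x1 * b^x2 * c^(N - x1 - x2)
      * pochhammer (- of_nat x1) p * pochhammer (- of_nat x2) q =
      of_nat (N choose x1) * pochhammer (- of_nat x1) p * a^x1 *
         (of_nat ((N - x1) choose x2) * pochhammer (- of_nat x2) q * b^x2 * c^(N - x1 - x2))"
      unfolding binomials by (simp add: field_simps)
  qed
  also have "\<dots> = (\<Sum>x1\<le>N. of_nat (N choose x1) * pochhammer (- of_nat x1) p
            * pochhammer (- of_nat (N - x1)) q * a^x1 * (b + c)^(N - x1 - q)) * b^q"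
    unfolding binomial_factorial_moment sum_distrib_right
    by (intro sum.cong refl) (simp add: algebra_simps)
  also have "\<dots> = pochhammer (- of_nat N :: 'a) (p + q) * a^p * (a + (b + c))^(N - p - q) * b^q"
    using binomial_factorial_moment_shifted[OF assms, of a "b + c"] by simp
  finally show ?thesis by (simp add: algebra_simps)
qed

lemma trinomial_factorial_moment:
  assumes "p + q \<le> N"
  shows "(\<Sum>(x1, x2)\<in>{(x1, x2). x1 + x2 \<le> N}. complex_of_real (trinomial x1 x2 N eta1 eta2)
            * (pochhammer (- of_nat x1) p * pochhammer (- of_nat x2) q))
       = pochhammer (- of_nat N) (p + q) * complex_of_real eta1 ^ p * complex_of_real eta2 ^ q"
  using trinomial_factorial_moment_general[OF assms, of "complex_of_real eta1"
      "complex_of_real eta2" "1 - complex_of_real eta1 - complex_of_real eta2"]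
  by (simp add: trinomial_def case_prod_beta mult.assoc)

section \<open>The trinomial expansion\<close>

text \<open>The terms of the trinomial expansion of (1 - X - Y)^m, written with
  Pochhammer symbols as they appear in the Krawtchouk series.\<close>

definition trinomial_coeff :: "nat \<Rightarrow> 'a \<Rightarrow> 'a \<Rightarrow> nat \<Rightarrow> nat \<Rightarrow> 'a::field_char_0" where
  "trinomial_coeff m X Y i j = pochhammer (- of_nat m) (i + j) / (fact i * fact j) * X^i * Y^j"

lemma trinomial_coeff_eq_0:
  "m < i + j \<Longrightarrow> trinomial_coeff m X Y i j = 0"
  by (simp add: trinomial_coeff_def pochhammer_of_nat_eq_0_iff)

text \<open>Trinomial expansion, using
  (-m)_(i+j)/(i! j!) = (-1)^(i+j) (m choose i) ((m-i) choose j).\<close>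

lemma trinomial_expansion:
  "(\<Sum>i\<le>m. \<Sum>j\<le>m - i. trinomial_coeff m X Y i j) = (1 - X - Y :: 'a::field_char_0)^m"
proof -
  have term_eq: "pochhammer (- of_nat m :: 'a) (i + j) / (fact i * fact j) * X^i * Y^j
      = of_nat (m choose i) * (-X)^i * (of_nat ((m - i) choose j) * (-Y)^j * 1^(m - i - j))"
    if "i \<le> m" for i j
  proof -
    have "pochhammer (- of_nat m :: 'a) (i + j) = pochhammer (- of_nat m) i * pochhammer (- of_nat (m - i)) j"
      using that by (simp add: pochhammer_product' of_nat_diff)
    then have "pochhammer (- of_nat m :: 'a) (i + j) / (fact i * fact j) * X^i * Y^j
        = (pochhammer (- of_nat m) i / fact i * X^i) * (pochhammer (- of_nat (m - i)) j / fact j * Y^j)"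
      by simp
    then show ?thesis
      by (simp add: pochhammer_neg_of_nat_div_fact power_minus[of X] power_minus[of Y])
  qed
  have "(\<Sum>i\<le>m. \<Sum>j\<le>m - i. trinomial_coeff m X Y i j)
      = (\<Sum>i\<le>m. of_nat (m choose i) * (-X)^i * (\<Sum>j\<le>m - i. of_nat ((m - i) choose j) * (-Y)^j * 1^(m - i - j)))"
    unfolding sum_distrib_left trinomial_coeff_def by (intro sum.cong refl term_eq) simp
  also have "\<dots> = (\<Sum>i\<le>m. of_nat (m choose i) * (-X)^i * (1 - Y)^(m - i))"
    using binomial_ring[of "-Y" "1::'a"] by simp
  also have "\<dots> = (-X + (1 - Y))^m" using binomial_ring[of "-X" "1 - Y" m] by simp
  also have "-X + (1 - Y) = 1 - X - Y" by simp
  finally show ?thesis .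
qed

lemma finite_quadruples: "finite {(i, j, k, l :: nat). i + j + k + l \<le> N}"
  by (rule finite_subset[of _ "{..N} \<times> {..N} \<times> {..N} \<times> {..N}"]) auto

lemma krawtchouk2_weighted_sum:
  assumes "finite S"
  shows "(\<Sum>(x1, x2)\<in>S. w x1 x2 * krawtchouk2 N u1 v1 u2 v2 m1 m2 x1 x2)
    = (\<Sum>(i, j, k, l)\<in>{(i, j, k, l). i + j + k + l \<le> N}.
        pochhammer (- of_nat m1) (i + j) * pochhammer (- of_nat m2) (k + l)
        / (fact i * fact j * fact k * fact l * pochhammer (- of_nat N) (i + j + k + l))
        * u1 ^ i * v1 ^ j * u2 ^ k * v2 ^ l
        * (\<Sum>(x1, x2)\<in>S. w x1 x2 * (pochhammer (- of_nat x1) (i + k) * pochhammer (- of_nat x2) (j + l))))"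
  using assms finite_quadruples[of N]
  unfolding krawtchouk2_def sum_distrib_left case_prod_beta
  by (subst sum.swap) (simp add: mult_ac times_divide_eq_left times_divide_eq_right)

lemma sum_quadruples_factor:
  fixes g h :: "nat \<Rightarrow> nat \<Rightarrow> 'a::comm_semiring_0"
  assumes "m1 + m2 \<le> N"
    and "\<And>i j. m1 < i + j \<Longrightarrow> g i j = 0" and "\<And>k l. m2 < k + l \<Longrightarrow> h k l = 0"
  shows "(\<Sum>(i, j, k, l)\<in>{(i, j, k, l). i + j + k + l \<le> N}. g i j * h k l)
       = (\<Sum>i\<le>m1. \<Sum>j\<le>m1 - i. g i j) * (\<Sum>k\<le>m2. \<Sum>l\<le>m2 - k. h k l)"
proof -
  define R where "R = Sigma {..m1} (\<lambda>i. Sigma {..m1 - i} (\<lambda>j. Sigma {..m2} (\<lambda>k. {..m2 - k})))"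
  have "(\<Sum>(i, j, k, l)\<in>{(i, j, k, l). i + j + k + l \<le> N}. g i j * h k l)
      = (\<Sum>(i, j, k, l)\<in>R. g i j * h k l)"
  proof (rule sum.mono_neutral_right[OF finite_quadruples])
    show "R \<subseteq> {(i, j, k, l). i + j + k + l \<le> N}" using assms(1) by (auto simp: R_def)
    show "\<forall>t\<in>{(i, j, k, l). i + j + k + l \<le> N} - R. (case t of (i, j, k, l) \<Rightarrow> g i j * h k l) = 0"
    proof clarify
      fix i j k l assume "(i, j, k, l) \<notin> R"
      then have "m1 < i + j \<or> m2 < k + l" by (auto simp: R_def)
      then show "g i j * h k l = 0" using assms(2,3) by auto
    qed
  qed
  also have "\<dots> = (\<Sum>i\<le>m1. \<Sum>j\<le>m1 - i. \<Sum>k\<le>m2. \<Sum>l\<le>m2 - k. g i j * h k l)"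
    by (simp add: R_def sum.Sigma)
  also have "\<dots> = (\<Sum>i\<le>m1. \<Sum>j\<le>m1 - i. g i j) * (\<Sum>k\<le>m2. \<Sum>l\<le>m2 - k. h k l)"
    by (simp only: sum_distrib_right) (simp only: sum_distrib_left)
  finally show ?thesis .
qed

text \<open>The trinomial average of P: after interchanging the sums, each factorial
  moment (-N)_(i+j+k+l) eta1^(i+k) eta2^(j+l) cancels the denominator (-N)_(i+j+k+l)
  of the Krawtchouk series, leaving a product of trinomial coefficients.\<close>

lemma trinomial_average_krawtchouk2:
  "(\<Sum>(x1, x2)\<in>{(x1, x2). x1 + x2 \<le> N}.
      complex_of_real (trinomial x1 x2 N eta1 eta2) * krawtchouk2 N u1 v1 u2 v2 m1 m2 x1 x2)
   = (\<Sum>(i, j, k, l)\<in>{(i, j, k, l). i + j + k + l \<le> N}.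
      trinomial_coeff m1 (complex_of_real eta1 * u1) (complex_of_real eta2 * v1) i j
      * trinomial_coeff m2 (complex_of_real eta1 * u2) (complex_of_real eta2 * v2) k l)"
proof -
  have finite_triangle: "finite {(x1, x2). x1 + x2 \<le> N}"
    by (rule finite_subset[of _ "{..N} \<times> {..N}"]) auto
  show ?thesis
    unfolding krawtchouk2_weighted_sum[OF finite_triangle]
  proof (intro sum.cong refl, clarify)
    fix i j k l :: nat assume le: "i + j + k + l \<le> N"
    have moment: "(\<Sum>(x1, x2)\<in>{(x1, x2). x1 + x2 \<le> N}. complex_of_real (trinomial x1 x2 N eta1 eta2)
            * (pochhammer (- of_nat x1) (i + k) * pochhammer (- of_nat x2) (j + l)))
        = pochhammer (- of_nat N) (i + j + k + l) * complex_of_real eta1 ^ (i + k) * complex_of_real eta2 ^ (j + l)"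
      using trinomial_factorial_moment[of "i + k" "j + l" N eta1 eta2] le by (simp add: ac_simps)
    from le have "pochhammer (- of_nat N :: complex) (i + j + k + l) \<noteq> 0"
      by (simp add: pochhammer_of_nat_eq_0_iff)
    then show "pochhammer (- of_nat m1) (i + j) * pochhammer (- of_nat m2) (k + l)
        / (fact i * fact j * fact k * fact l * pochhammer (- of_nat N) (i + j + k + l))
        * u1 ^ i * v1 ^ j * u2 ^ k * v2 ^ l
        * (\<Sum>(x1, x2)\<in>{(x1, x2). x1 + x2 \<le> N}. complex_of_real (trinomial x1 x2 N eta1 eta2)
            * (pochhammer (- of_nat x1) (i + k) * pochhammer (- of_nat x2) (j + l)))
      = trinomial_coeff m1 (complex_of_real eta1 * u1) (complex_of_real eta2 * v1) i j
        * trinomial_coeff m2 (complex_of_real eta1 * u2) (complex_of_real eta2 * v2) k l"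
      unfolding moment trinomial_coeff_def by (simp add: power_add power_mult_distrib field_simps)
  qed
qed

theorem mainTheorem1:
  fixes N n1 n2 :: nat and eta1 eta2 :: real and u1 v1 u2 v2 :: complex
  assumes "0 < eta1" "eta1 < 1" "0 < eta2" "eta2 < 1" "eta1 + eta2 < 1"
    and "n1 + n2 \<le> N"
  shows "(\<Sum>(x1,x2) \<in> {(x1,x2). x1 + x2 \<le> N}.
            complex_of_real (trinomial x1 x2 N eta1 eta2) * krawtchouk2 N u1 v1 u2 v2 n1 n2 x1 x2)
         = (1 - complex_of_real eta1 * u1 - complex_of_real eta2 * v1) ^ n1
           * (1 - complex_of_real eta1 * u2 - complex_of_real eta2 * v2) ^ n2"
proof -
  have "(\<Sum>(x1,x2) \<in> {(x1,x2). x1 + x2 \<le> N}.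
            complex_of_real (trinomial x1 x2 N eta1 eta2) * krawtchouk2 N u1 v1 u2 v2 n1 n2 x1 x2)
      = (\<Sum>(i, j, k, l)\<in>{(i, j, k, l). i + j + k + l \<le> N}.
          trinomial_coeff n1 (complex_of_real eta1 * u1) (complex_of_real eta2 * v1) i j
          * trinomial_coeff n2 (complex_of_real eta1 * u2) (complex_of_real eta2 * v2) k l)"
    by (rule trinomial_average_krawtchouk2)
  also have "\<dots> = (\<Sum>i\<le>n1. \<Sum>j\<le>n1 - i. trinomial_coeff n1 (complex_of_real eta1 * u1) (complex_of_real eta2 * v1) i j)
      * (\<Sum>k\<le>n2. \<Sum>l\<le>n2 - k. trinomial_coeff n2 (complex_of_real eta1 * u2) (complex_of_real eta2 * v2) k l)"
    using assms(6) by (intro sum_quadruples_factor trinomial_coeff_eq_0)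
  finally show ?thesis unfolding trinomial_expansion .
qed

end
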